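(* In the network setting of the context, suppose there is at most one $i\in\mathcal I$ with $|\mathcal J(i)|>1$. Then for every $m\ge1$ there exist positive constants $\delta,\hat\kappa$ and a positive definite matrix $Q\in\mathbb R^{I\times I}$ such that the function $\mathcal V\in C^2(\mathbb R^I)$ with $\mathcal V(x)=(x^{\mathsf T}Qx)^{m/2}$ for $|x|\ge1$ satisfies $$\mathcal L^u\mathcal V(x)\le\hat\kappa-|x|^m\qquad\forall x\in\mathcal K_{\delta,+}^c,\ \forall u\in\mathbb U,$$ where $\mathcal K_{\delta,+}=\{x\in\mathbb R^I:e\cdot x>\delta|x|\}$.
   Context: Network setting. $\mathcal I=\{1,\dots,I\}$, $\mathcal J=\{1,\dots,J\}$; $\mathcal G$ a bipartite tree on $\mathcal I\cup\mathcal J$ with edges $i\sim j$; $\mathcal J(i)=\{j:i\sim j\}$. Constants $\lambda_i>0$, $\gamma_i\ge0$, $\ell_i\in\mathbb R$; $\mu_{ij}>0$ if $i\sim j$, $\mu_{ij}=0$ otherwise. $e$ = all-ones vector, $a^\pm$ positive/negative parts. For $e\cdot\alpha=e\cdot\beta$, $G(\alpha,\beta)$ is the unique $\psi\in\mathbb R^{I\times J}$ with row sums $\alpha_i$, column sums $\beta_j$, and $\psi_{ij}=0$ for $i\not\sim j$. $\mathbb U=\{u=(u^c,u^s)\in\mathbb R^I_+\times\mathbb R^J_+:e\cdot u^c=e\cdot u^s=1\}$; $\hat G[u](x)=G(x-(e\cdot x)^+u^c,-(e\cdot x)^-u^s)$; drift $b_i(x,u)=-\sum_{j\in\mathcal J(i)}\mu_{ij}\hat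 G_{ij}[u](x)-\gamma_i(e\cdot x)^+u^c_i+\ell_i$. Controlled generator $\mathcal L^u f(x)=\sum_i\lambda_i\partial_{ii}f(x)+b(x,u)\cdot\nabla f(x)$. *)

theory Defs
  imports "HOL-Analysis.Analysis"
begin

text \<open>Customer classes are indexed by a finite type 'i, server pools by a finite type 'j.
  The edge relation E i j encodes i \<sim> j.\<close>

definition bip_adj :: "('i \<Rightarrow> 'j \<Rightarrow> bool) \<Rightarrow> ('i + 'j) \<Rightarrow> ('i + 'j) \<Rightarrow> bool" where
  "bip_adj E v w = (case (v, w) of
      (Inl i, Inr j) \<Rightarrow> E i j
    | (Inr j, Inl i) \<Rightarrow> E i j
    | _ \<Rightarrow> False)"

definition bip_tree :: "('i::finite \<Rightarrow> 'j::finite \<Rightarrow> bool) \<Rightarrow> bool" where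
  "bip_tree E \<longleftrightarrow> (\<forall>v w. (bip_adj E)\<^sup>*\<^sup>* v w)
      \<and> card {(i, j). E i j} + 1 = CARD('i) + CARD('j)"

definition esum :: "real^'n::finite \<Rightarrow> real" where
  "esum x = (\<Sum>i\<in>UNIV. x $ i)"

definition posp :: "real \<Rightarrow> real" where "posp a = max a 0"
definition negp :: "real \<Rightarrow> real" where "negp a = max (- a) 0"

definition Gmap :: "('i::finite \<Rightarrow> 'j::finite \<Rightarrow> bool) \<Rightarrow> real^'i \<Rightarrow> real^'j \<Rightarrow> ('i \<Rightarrow> 'j \<Rightarrow> real)" where
  "Gmap E \<alpha> \<beta> = (THE \<psi>. (\<forall>i. (\<Sum>j\<in>UNIV. \<psi> i j) = \<alpha> $ i)
                       \<and> (\<forall>j. (\<Sum>i\<in>UNIV. \<psi> i j) = \<beta> $ j)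
                       \<and> (\<forall>i j. \<not> E i j \<longrightarrow> \<psi> i j = 0))"

definition UU :: "((real^'i::finite) \<times> (real^'j::finite)) set" where
  "UU = {(uc, us). (\<forall>i. uc $ i \<ge> 0) \<and> (\<forall>j. us $ j \<ge> 0) \<and> esum uc = 1 \<and> esum us = 1}"

definition Ghat :: "('i::finite \<Rightarrow> 'j::finite \<Rightarrow> bool) \<Rightarrow> ((real^'i) \<times> (real^'j)) \<Rightarrow> real^'i \<Rightarrow> ('i \<Rightarrow> 'j \<Rightarrow> real)" where
  "Ghat E u x = Gmap E (x - posp (esum x) *\<^sub>R fst u) (- (negp (esum x) *\<^sub>R snd u))"

definition drift :: "('i::finite \<Rightarrow> 'j::finite \<Rightarrow> bool) \<Rightarrow> ('i \<Rightarrow> 'j \<Rightarrow> real) \<Rightarrow> ('i \<Rightarrow> real) \<Rightarrow> ('i \<Rightarrow> real)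
     \<Rightarrow> real^'i \<Rightarrow> ((real^'i) \<times> (real^'j)) \<Rightarrow> real^'i" where
  "drift E \<mu> \<gamma> ell x u = (\<chi> i. - (\<Sum>j\<in>{j. E i j}. \<mu> i j * Ghat E u x i j)
                               - \<gamma> i * posp (esum x) * fst u $ i + ell i)"

text \<open>V is C^2 with gradient DV and Hessian H (H x $ i $ k = d_k d_i V(x)).\<close>
definition C2_with :: "(real^'n::finite \<Rightarrow> real) \<Rightarrow> (real^'n \<Rightarrow> real^'n) \<Rightarrow> (real^'n \<Rightarrow> real^'n^'n) \<Rightarrow> bool" where
  "C2_with V DV H \<longleftrightarrow> (\<forall>x. (V has_derivative (\<lambda>h. DV x \<bullet> h)) (at x))
      \<and> (\<forall>x. (DV has_derivative (\<lambda>h. H x *v h)) (at x))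
      \<and> continuous_on UNIV H"

definition ctrl_gen :: "('i::finite \<Rightarrow> real) \<Rightarrow> (real^'i \<Rightarrow> 'u \<Rightarrow> real^'i)
     \<Rightarrow> (real^'i \<Rightarrow> real^'i) \<Rightarrow> (real^'i \<Rightarrow> real^'i^'i) \<Rightarrow> real^'i \<Rightarrow> 'u \<Rightarrow> real" where
  "ctrl_gen lam b DV H x u = (\<Sum>i\<in>UNIV. lam i * H x $ i $ i) + b x u \<bullet> DV x"

definition pos_def_mat :: "real^'n::finite^'n \<Rightarrow> bool" where
  "pos_def_mat Q \<longleftrightarrow> transpose Q = Q \<and> (\<forall>x. x \<noteq> 0 \<longrightarrow> x \<bullet> (Q *v x) > 0)"

end

theory Submission
  imports Defs
begin

text \<open>In a tree with at most one branching class, one class i0 (the hub) is served by every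
  pool and every other class k (a leaf) by a single pool p(k); the routing map G is then explicit.
  For x'Qx = t((e.x)^2 + K sum_{k ~= i0} x_k^2) the drift satisfies b(x,u).Qx <= -c|x|^2 + C|x|
  on the cone e.x <= delta|x|: each leaf coordinate decays at rate mu_{k p(k)}, a negative e.x
  is pushed back at rate at least min_j mu_{i0 j}, and inside the cone a positive e.x is
  dominated by the leaf mass. For V = (x'Qx)^(m/2) the diffusion term and the linear part of the
  drift are O(|x|^(m-1)), while the quadratic part of the drift is below -2|x|^m once t is large;
  on bounded sets L^u V is bounded by continuity.\<close>

section \<open>Trees with at most one branching class are stars\<close>

lemma bip_tree_has_neighbour:
  assumes "bip_tree E" shows "\<exists>j. E i j"
proof -
  have "(bip_adj E)\<^sup>*\<^sup>* (Inl i) (Inr undefined)" using assms unfolding bip_tree_def by blast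
  then show ?thesis
  proof (cases rule: converse_rtranclpE)
    case (step y) then show ?thesis by (cases y) (auto simp: bip_adj_def)
  qed simp
qed

lemma bip_tree_star:
  fixes E :: "'i::finite \<Rightarrow> 'j::finite \<Rightarrow> bool"
  assumes tree: "bip_tree E" and one_branch: "card {i. card {j. E i j} > 1} \<le> 1"
  obtains i0 where "\<forall>j. E i0 j" and "\<forall>i. i \<noteq> i0 \<longrightarrow> card {j. E i j} = 1"
proof -
  define S where "S = {i. card {j. E i j} > 1}"
  define i0 where "i0 = (SOME i. i \<in> S)"
  have deg_pos: "card {j. E i j} \<ge> 1" for i
    using bip_tree_has_neighbour[OF tree, of i] by (auto simp: Suc_leI card_gt_0_iff)
  have deg_one: "card {j. E i j} = 1" if "i \<noteq> i0" for i
  proof (rule ccontr)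
    assume "card {j. E i j} \<noteq> 1"
    with deg_pos[of i] have "i \<in> S" unfolding S_def by simp
    then have "i0 \<in> S" unfolding i0_def by (rule someI)
    with \<open>i \<in> S\<close> have "card {i, i0} \<le> card S" by (intro card_mono) auto
    with that one_branch show False unfolding S_def by simp
  qed
  \<comment> \<open>A tree has |I| + |J| - 1 edges, so the remaining class meets every pool.\<close>
  have "card {(i, j). E i j} = (\<Sum>i\<in>UNIV. card {j. E i j})"
  proof -
    have "{(i, j). E i j} = (SIGMA i:UNIV. {j. E i j})" by auto
    then show ?thesis by simp
  qed
  also have "\<dots> = card {j. E i0 j} + (\<Sum>i\<in>UNIV - {i0}. card {j. E i j})"
    by (simp add: sum.remove)
  also have "(\<Sum>i\<in>UNIV - {i0}. card {j. E i j}) = (\<Sum>i\<in>UNIV - {i0}. 1)"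
    using deg_one by (intro sum.cong) auto
  finally have edges: "card {(i, j). E i j} = card {j. E i0 j} + (CARD('i) - 1)"
    by (simp add: card_Diff_singleton)
  have "CARD('i) \<ge> 1" by (simp add: Suc_leI)
  with edges tree have "card {j. E i0 j} = CARD('j)" unfolding bip_tree_def by linarith
  then have "{j. E i0 j} = UNIV" by (simp add: card_eq_UNIV_imp_eq_UNIV)
  then have "\<forall>j. E i0 j" by blast
  with deg_one show thesis using that by blast
qed

section \<open>The routing map of a star network\<close>

lemma esum_diff: "esum (a - b) = esum a - esum b"
  unfolding esum_def by (simp add: sum_subtractf)

lemma esum_scaleR: "esum (c *\<^sub>R a) = c * esum a"
  unfolding esum_def by (simp add: sum_distrib_left)

lemma esum_uminus: "esum (- a) = - esum a"
  unfolding esum_def by (simp add: sum_negf)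

definition is_routing :: "('i::finite \<Rightarrow> 'j::finite \<Rightarrow> bool) \<Rightarrow> real^'i \<Rightarrow> real^'j
    \<Rightarrow> ('i \<Rightarrow> 'j \<Rightarrow> real) \<Rightarrow> bool" where
  "is_routing E \<alpha> \<beta> \<psi> \<longleftrightarrow> (\<forall>i. (\<Sum>j\<in>UNIV. \<psi> i j) = \<alpha> $ i)
     \<and> (\<forall>j. (\<Sum>i\<in>UNIV. \<psi> i j) = \<beta> $ j) \<and> (\<forall>i j. \<not> E i j \<longrightarrow> \<psi> i j = 0)"

lemma Gmap_eq_The_is_routing: "Gmap E \<alpha> \<beta> = (THE \<psi>. is_routing E \<alpha> \<beta> \<psi>)"
  unfolding Gmap_def is_routing_def ..

locale star_network =
  fixes E :: "'i::finite \<Rightarrow> 'j::finite \<Rightarrow> bool" and i0 :: 'i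
  assumes hub_adj: "\<forall>j. E i0 j" and leaf_degree: "\<forall>i. i \<noteq> i0 \<longrightarrow> card {j. E i j} = 1"
begin

definition pool :: "'i \<Rightarrow> 'j" where "pool i = (SOME j. E i j)"

lemma adj_iff_pool: assumes "i \<noteq> i0" shows "E i j \<longleftrightarrow> j = pool i"
proof -
  from leaf_degree assms obtain j0 where j0: "{j. E i j} = {j0}"
    by (metis card_1_singletonE)
  then have "E i (pool i)" unfolding pool_def by (metis mem_Collect_eq singletonI someI)
  with j0 show ?thesis by (metis (mono_tags) mem_Collect_eq singletonD singletonI)
qed

abbreviation leaves :: "'i set" where "leaves \<equiv> UNIV - {i0}"

lemma esum_hub_split: "esum x = x$i0 + (\<Sum>k\<in>leaves. x$k)"
  unfolding esum_def by (simp add: sum.remove)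

definition star_flow :: "real^'i \<Rightarrow> real^'j \<Rightarrow> 'i \<Rightarrow> 'j \<Rightarrow> real" where
  "star_flow \<alpha> \<beta> = (\<lambda>i j.
     if i = i0 then \<beta>$j - (\<Sum>k\<in>leaves. if pool k = j then \<alpha>$k else 0)
     else if j = pool i then \<alpha>$i else 0)"

lemma star_flow_is_routing:
  assumes bal: "esum \<alpha> = esum \<beta>"
  shows "is_routing E \<alpha> \<beta> (star_flow \<alpha> \<beta>)"
proof -
  let ?g = "star_flow \<alpha> \<beta>"
  have swap: "(\<Sum>j\<in>UNIV. \<Sum>k\<in>leaves. if pool k = j then \<alpha>$k else 0) = (\<Sum>k\<in>leaves. \<alpha>$k)"
    by (subst sum.swap) simp
  have rows: "(\<Sum>j\<in>UNIV. ?g i j) = \<alpha> $ i" for i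
  proof (cases "i = i0")
    case True
    have "(\<Sum>j\<in>UNIV. ?g i j) = esum \<beta> - (\<Sum>k\<in>leaves. \<alpha>$k)"
      using True unfolding star_flow_def esum_def by (simp add: sum_subtractf swap)
    then show ?thesis using bal esum_hub_split[of \<alpha>] True by simp
  qed (simp add: star_flow_def)
  have cols: "(\<Sum>i\<in>UNIV. ?g i j) = \<beta> $ j" for j
  proof -
    have "(\<Sum>i\<in>UNIV. ?g i j) = ?g i0 j + (\<Sum>i\<in>leaves. ?g i j)" by (simp add: sum.remove)
    also have "(\<Sum>i\<in>leaves. ?g i j) = (\<Sum>k\<in>leaves. if pool k = j then \<alpha>$k else 0)"
      unfolding star_flow_def by (intro sum.cong) auto
    finally show ?thesis unfolding star_flow_def by simp
  qed
  have "\<not> E i j \<longrightarrow> ?g i j = 0" for i j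
    using hub_adj adj_iff_pool unfolding star_flow_def by auto
  with rows cols show ?thesis unfolding is_routing_def by blast
qed

lemma is_routing_imp_star_flow:
  assumes H: "is_routing E \<alpha> \<beta> \<psi>"
  shows "\<psi> = star_flow \<alpha> \<beta>"
proof -
  have leaf_row: "\<psi> i j = (if j = pool i then \<alpha>$i else 0)" if "i \<noteq> i0" for i j
  proof -
    have off: "\<psi> i j' = 0" if "j' \<noteq> pool i" for j'
      using H adj_iff_pool \<open>i \<noteq> i0\<close> that unfolding is_routing_def by blast
    have "(\<Sum>j\<in>UNIV. \<psi> i j) = \<psi> i (pool i)"
      by (subst sum.remove[of _ "pool i"]) (auto simp: off)
    with H off show ?thesis unfolding is_routing_def by auto
  qed
  have hub_row: "\<psi> i0 j = \<beta>$j - (\<Sum>k\<in>leaves. if pool k = j then \<alpha>$k else 0)" for j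
  proof -
    have "\<beta>$j = (\<Sum>i\<in>UNIV. \<psi> i j)" using H unfolding is_routing_def by simp
    also have "\<dots> = \<psi> i0 j + (\<Sum>i\<in>leaves. \<psi> i j)" by (simp add: sum.remove)
    also have "(\<Sum>i\<in>leaves. \<psi> i j) = (\<Sum>k\<in>leaves. if pool k = j then \<alpha>$k else 0)"
      using leaf_row by (intro sum.cong) auto
    finally show ?thesis by simp
  qed
  show "\<psi> = star_flow \<alpha> \<beta>" unfolding star_flow_def using leaf_row hub_row by (intro ext) auto
qed

lemma Gmap_eq_star_flow:
  assumes "esum \<alpha> = esum \<beta>"
  shows "Gmap E \<alpha> \<beta> = star_flow \<alpha> \<beta>"
  unfolding Gmap_eq_The_is_routing
  using star_flow_is_routing[OF assms] is_routing_imp_star_flow by (rule the_equality)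

lemma Ghat_eq_star_flow:
  assumes u: "u \<in> UU"
  shows "Ghat E u x = star_flow (x - posp (esum x) *\<^sub>R fst u) (- (negp (esum x) *\<^sub>R snd u))"
proof -
  have "esum (fst u) = 1" "esum (snd u) = 1" using u unfolding UU_def by auto
  then have "esum (x - posp (esum x) *\<^sub>R fst u) = esum (- (negp (esum x) *\<^sub>R snd u))"
    by (simp add: esum_diff esum_scaleR esum_uminus posp_def negp_def)
  then show ?thesis unfolding Ghat_def by (simp add: Gmap_eq_star_flow)
qed

lemma drift_leaf:
  assumes u: "u \<in> UU" and i: "i \<noteq> i0"
  shows "drift E \<mu> \<gamma> ell x u $ i = - \<mu> i (pool i) * (x$i - max (esum x) 0 * fst u $ i)
            - \<gamma> i * max (esum x) 0 * fst u $ i + ell i"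
proof -
  have "{j. E i j} = {pool i}" using adj_iff_pool[OF i] by auto
  then show ?thesis
    unfolding drift_def using i by (simp add: Ghat_eq_star_flow[OF u] star_flow_def posp_def)
qed

lemma drift_hub:
  assumes u: "u \<in> UU"
  shows "drift E \<mu> \<gamma> ell x u $ i0 = max (- esum x) 0 * (\<Sum>j\<in>UNIV. \<mu> i0 j * snd u $ j)
            + (\<Sum>k\<in>leaves. \<mu> i0 (pool k) * (x$k - max (esum x) 0 * fst u $ k))
            - \<gamma> i0 * max (esum x) 0 * fst u $ i0 + ell i0"
proof -
  define a where "a = x - posp (esum x) *\<^sub>R fst u"
  have "{j. E i0 j} = UNIV" using hub_adj by auto
  then have "(\<Sum>j\<in>{j. E i0 j}. \<mu> i0 j * Ghat E u x i0 j)
      = (\<Sum>j\<in>UNIV. \<mu> i0 j * (- negp (esum x) * snd u $ j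
           - (\<Sum>k\<in>leaves. if pool k = j then a$k else 0)))"
    unfolding a_def by (simp add: Ghat_eq_star_flow[OF u] star_flow_def)
  also have "\<dots> = - negp (esum x) * (\<Sum>j\<in>UNIV. \<mu> i0 j * snd u $ j)
       - (\<Sum>j\<in>UNIV. \<Sum>k\<in>leaves. if pool k = j then \<mu> i0 j * a$k else 0)"
    by (simp add: algebra_simps sum_subtractf sum_distrib_left sum_negf if_distrib cong: if_cong)
  also have "(\<Sum>j\<in>UNIV. \<Sum>k\<in>leaves. if pool k = j then \<mu> i0 j * a$k else 0)
      = (\<Sum>k\<in>leaves. \<mu> i0 (pool k) * a$k)"
    by (subst sum.swap) (simp add: if_distrib[symmetric] eq_commute)
  finally show ?thesis unfolding drift_def by (simp add: a_def posp_def negp_def)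
qed

end

lemma mult_le_abs_mult_bound:
  fixes x y B :: real
  assumes "\<bar>y\<bar> \<le> B" shows "x * y \<le> \<bar>x\<bar> * B"
proof -
  have "x * y \<le> \<bar>x\<bar> * \<bar>y\<bar>" by (simp add: abs_mult[symmetric])
  also have "\<dots> \<le> \<bar>x\<bar> * B" using assms by (intro mult_left_mono) auto
  finally show ?thesis .
qed

lemma abs_sum_mult_le:
  fixes f g :: "'a \<Rightarrow> real"
  assumes "\<And>k. k \<in> A \<Longrightarrow> \<bar>g k\<bar> \<le> Z"
  shows "\<bar>\<Sum>k\<in>A. f k * g k\<bar> \<le> (\<Sum>k\<in>A. \<bar>f k\<bar>) * Z"
proof -
  have "\<bar>\<Sum>k\<in>A. f k * g k\<bar> \<le> (\<Sum>k\<in>A. \<bar>f k\<bar> * \<bar>g k\<bar>)"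
    unfolding abs_mult[symmetric] by (rule sum_abs)
  also have "\<dots> \<le> (\<Sum>k\<in>A. \<bar>f k\<bar> * Z)" using assms by (intro sum_mono mult_left_mono) auto
  finally show ?thesis by (simp add: sum_distrib_right)
qed

lemma abs_sum_mult_le_sum_abs:
  fixes f g :: "'a \<Rightarrow> real"
  assumes "finite A"
  shows "\<bar>\<Sum>k\<in>A. f k * g k\<bar> \<le> (\<Sum>k\<in>A. \<bar>f k\<bar>) * (\<Sum>k\<in>A. \<bar>g k\<bar>)"
  using assms by (intro abs_sum_mult_le member_le_sum) auto

text \<open>In the next three lemmas s stands for e.x, a for the l1-norm of the non-hub
  coordinates of x, and the other variables for the terms of the expansion in
  drift_inner_lyap_vec below.\<close>

lemma drift_core_amgm:
  fixes s a A T1 R3 Dm \<mu>m \<kappa>0 :: real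
  assumes mum: "\<mu>m > 0" and A: "A \<ge> \<mu>m" and T1: "\<bar>T1\<bar> \<le> Dm * a"
    and R3: "R3 \<ge> \<kappa>0 * a^2" and k0: "\<kappa>0 \<ge> Dm^2 / (2*\<mu>m) + 2"
  shows "s * (- s * A + T1) - R3 \<le> - min (\<mu>m/2) (1/2) * (s^2 + a^2)"
proof -
  let ?c = "min (\<mu>m/2) (1/2)"
  have sA: "s * (- s * A) \<le> - \<mu>m * s^2"
    using mult_right_mono[OF A, of "s * s"] by (simp add: power2_eq_square algebra_simps)
  have amgm: "s * T1 \<le> (\<mu>m/2) * s^2 + Dm^2 / (2*\<mu>m) * a^2"
  proof -
    have "0 \<le> (\<mu>m * \<bar>s\<bar> - Dm * a)^2" by simp
    then have "2*\<mu>m * (\<bar>s\<bar> * (Dm * a)) \<le> \<mu>m^2 * s^2 + Dm^2 * a^2"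
      by (simp add: power2_eq_square algebra_simps)
    then have "\<bar>s\<bar> * (Dm * a) \<le> (\<mu>m/2) * s^2 + Dm^2 / (2*\<mu>m) * a^2"
      using mum by (simp add: field_simps power2_eq_square)
    then show ?thesis using mult_le_abs_mult_bound[OF T1, of s] by linarith
  qed
  have "Dm^2 / (2*\<mu>m) * a^2 + 2 * a^2 \<le> \<kappa>0 * a^2"
    using mult_right_mono[OF k0, of "a^2"] by (simp add: distrib_right)
  moreover have "?c * s^2 \<le> (\<mu>m/2) * s^2" "?c * a^2 \<le> 2 * a^2"
    by (intro mult_right_mono; simp)+
  moreover have "s * (- s * A + T1) = s * (- s * A) + s * T1" "?c * (s^2 + a^2) = ?c * s^2 + ?c * a^2"
    by (simp_all add: algebra_simps)
  ultimately show ?thesis using sA amgm R3 by linarith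
qed

lemma drift_core_cone:
  fixes s a T1 T2 G R3 R4 K \<eta> Dm \<kappa>0 Mg c :: real
  assumes s: "0 < s" "s \<le> \<eta> * a" and a: "a \<ge> 0" and eta: "\<eta> \<le> 1" "\<eta> * (2*Dm + K*Mg) \<le> 1"
    and T1: "\<bar>T1\<bar> \<le> Dm * a" and T2: "\<bar>T2\<bar> \<le> Dm" and G: "G \<ge> 0"
    and R3: "R3 \<ge> \<kappa>0 * a^2" and k0: "\<kappa>0 \<ge> 2" and R4: "\<bar>R4\<bar> \<le> Mg * a"
    and K: "K \<ge> 0" and Dm: "Dm \<ge> 0" and Mg: "Mg \<ge> 0" and c: "c \<le> 1/2"
  shows "s * (T1 - s * T2 - s * G) - R3 + K * (s * R4) \<le> - c * (s^2 + a^2)"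
proof -
  have sa: "s * a \<le> \<eta> * a^2" using mult_right_mono[OF s(2) a] by (simp add: power2_eq_square)
  have "0 < \<eta> * a" using s by linarith
  then have \<eta>: "\<eta> \<ge> 0" using a by (simp add: zero_less_mult_iff)
  have "s * s \<le> (\<eta> * a) * (\<eta> * a)" using s by (intro mult_mono) auto
  also have "\<dots> = \<eta> * (\<eta> * a^2)" by (simp add: power2_eq_square)
  also have "\<dots> \<le> 1 * (\<eta> * a^2)" using eta(1) \<eta> by (intro mult_right_mono) auto
  finally have ss: "s^2 \<le> \<eta> * a^2" by (simp add: power2_eq_square)
  have "s * T1 \<le> Dm * (s * a)" using mult_le_abs_mult_bound[OF T1, of s] s by simp
  moreover have "- (s * (s * T2)) \<le> Dm * s^2"
    using mult_le_abs_mult_bound[of "-T2" Dm "s * s"] T2 by (simp add: power2_eq_square ac_simps)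
  moreover have "0 \<le> s * (s * G)" using G s by simp
  moreover have "K * (s * R4) \<le> K * Mg * (s * a)"
    using mult_left_mono[OF mult_le_abs_mult_bound[OF R4, of s] K] s by (simp add: ac_simps)
  moreover have "Dm * (s * a) + Dm * s^2 + K * Mg * (s * a) \<le> \<eta> * (2*Dm + K*Mg) * a^2"
    using mult_left_mono[OF sa Dm] mult_left_mono[OF ss Dm]
      mult_left_mono[OF sa mult_nonneg_nonneg[OF K Mg]]
    by (simp add: algebra_simps)
  moreover have "\<eta> * (2*Dm + K*Mg) * a^2 \<le> a^2" using mult_right_mono[OF eta(2), of "a^2"] by simp
  moreover have "2 * a^2 \<le> R3" using R3 mult_right_mono[OF k0, of "a^2"] by simp
  moreover have "c * (s^2 + a^2) \<le> a^2"
    using mult_right_mono[OF c, of "s^2 + a^2"] ss mult_right_mono[OF eta(1), of "a^2"] by simp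
  moreover have "s * (T1 - s * T2 - s * G) = s * T1 - s * (s * T2) - s * (s * G)"
    by (simp add: algebra_simps)
  ultimately show ?thesis by linarith
qed


lemma drift_scalar_ineq:
  fixes s a A T1 T2 G L R3 R4 R5 K \<eta> Dm \<mu>m \<kappa>0 L1 Lm Mg :: real
  assumes a: "a \<ge> 0" and mum: "\<mu>m > 0" and A: "A \<ge> \<mu>m" and T1: "\<bar>T1\<bar> \<le> Dm * a"
    and T2: "\<bar>T2\<bar> \<le> Dm" and G: "G \<ge> 0" and L: "\<bar>L\<bar> \<le> L1" and K: "K \<ge> 0"
    and R3: "K * R3 \<ge> \<kappa>0 * a^2" and k0: "\<kappa>0 \<ge> Dm^2 / (2*\<mu>m) + 2"
    and R4: "\<bar>R4\<bar> \<le> Mg * a" and R5: "\<bar>R5\<bar> \<le> Lm * a"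
    and eta: "\<eta> \<le> 1" "\<eta> * (2*Dm + K*Mg) \<le> 1" and cone: "s > 0 \<longrightarrow> s \<le> \<eta> * a"
    and Dm: "Dm \<ge> 0" and Mg: "Mg \<ge> 0" and Lm: "Lm \<ge> 0"
  shows "s * (max (-s) 0 * A + T1 - max s 0 * T2 - max s 0 * G + L) + K * (- R3 + max s 0 * R4 + R5)
     \<le> - min (\<mu>m/2) (1/2) * (s^2 + a^2) + (L1 + K * Lm) * (\<bar>s\<bar> + a)"
proof -
  have "s * L \<le> L1 * \<bar>s\<bar>" using mult_le_abs_mult_bound[OF L, of s] by (simp add: mult.commute)
  moreover have "K * R5 \<le> K * Lm * a" using mult_le_abs_mult_bound[OF R5, of K] K by simp
  moreover have "0 \<le> L1 * a" "0 \<le> K * Lm * \<bar>s\<bar>" using L a K Lm by auto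
  moreover have "(L1 + K * Lm) * (\<bar>s\<bar> + a) = L1 * \<bar>s\<bar> + L1 * a + K * Lm * \<bar>s\<bar> + K * Lm * a"
    by (simp add: algebra_simps)
  ultimately have lin: "s * L + K * R5 \<le> (L1 + K * Lm) * (\<bar>s\<bar> + a)" by linarith
  show ?thesis
  proof (cases "s > 0")
    case True
    have "Dm^2 / (2*\<mu>m) \<ge> 0" using mum by simp
    then have "\<kappa>0 \<ge> 2" using k0 by linarith
    then have "s * (T1 - s * T2 - s * G) - K * R3 + K * (s * R4) \<le> - min (\<mu>m/2) (1/2) * (s^2 + a^2)"
      using drift_core_cone[OF True _ a eta T1 T2 G R3 _ R4 K Dm Mg] cone True by simp
    moreover have "s * (max (-s) 0 * A + T1 - max s 0 * T2 - max s 0 * G + L) + K * (- R3 + max s 0 * R4 + R5)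
        = s * (T1 - s * T2 - s * G) - K * R3 + K * (s * R4) + (s * L + K * R5)"
      using True by (simp add: algebra_simps)
    ultimately show ?thesis using lin by linarith
  next
    case False
    have "s * (- s * A + T1) - K * R3 \<le> - min (\<mu>m/2) (1/2) * (s^2 + a^2)"
      using drift_core_amgm[OF mum A T1 R3 k0] by simp
    moreover have "s * (max (-s) 0 * A + T1 - max s 0 * T2 - max s 0 * G + L) + K * (- R3 + max s 0 * R4 + R5)
        = s * (- s * A + T1) - K * R3 + (s * L + K * R5)"
      using False by (simp add: algebra_simps max_def)
    ultimately show ?thesis using lin by linarith
  qed
qed

lemma powr_ratio_bounds:
  fixes r W \<alpha> \<beta> m :: real
  assumes r: "r > 0" and \<alpha>: "\<alpha> > 0" and lower: "\<alpha> * r^2 \<le> W" and upper: "W \<le> \<beta> * r^2"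
    and m: "m \<ge> 0"
  shows "\<alpha> powr (m/2) * r powr m / (\<beta> * r^2) \<le> W powr (m/2 - 1)"
    and "W powr (m/2 - 1) \<le> \<beta> powr (m/2) * r powr m / (\<alpha> * r^2)"
proof -
  have W: "W > 0" using mult_pos_pos[OF \<alpha>, of "r^2"] r lower by simp
  then have "0 < \<beta> * r^2" using upper by linarith
  then have \<beta>: "\<beta> > 0" by (rule zero_less_mult_pos2) (use r in simp)
  have "(r^2) powr (m/2) = (r powr 2) powr (m/2)" using r by (simp add: powr_realpow)
  then have r_sq: "(r^2) powr (m/2) = r powr m" by (simp add: powr_powr)
  have "\<alpha> powr (m/2) * r powr m = (\<alpha> * r^2) powr (m/2)"
    using \<alpha> r by (simp add: powr_mult r_sq)
  also have "\<dots> \<le> W powr (m/2)" using lower \<alpha> r m by (intro powr_mono2) auto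
  finally have lo: "\<alpha> powr (m/2) * r powr m \<le> W powr (m/2)" .
  have "W powr (m/2) \<le> (\<beta> * r^2) powr (m/2)" using upper W m by (intro powr_mono2) auto
  also have "\<dots> = \<beta> powr (m/2) * r powr m" using \<beta> r by (simp add: powr_mult r_sq)
  finally have hi: "W powr (m/2) \<le> \<beta> powr (m/2) * r powr m" .
  have W_eq: "W powr (m/2 - 1) = W powr (m/2) / W" using W by (simp add: powr_diff)
  show "\<alpha> powr (m/2) * r powr m / (\<beta> * r^2) \<le> W powr (m/2 - 1)"
    unfolding W_eq by (rule frac_le) (use lo upper W in auto)
  show "W powr (m/2 - 1) \<le> \<beta> powr (m/2) * r powr m / (\<alpha> * r^2)"
    unfolding W_eq by (rule frac_le) (use hi lower \<alpha> r in auto)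
qed

lemma powr_drift_dominates:
  fixes r W \<alpha> \<beta> m k g C c :: real
  assumes r: "r > 0" and \<alpha>: "\<alpha> > 0" and lower: "\<alpha> * r^2 \<le> W" and upper: "W \<le> \<beta> * r^2"
    and m: "m \<ge> 0" and k: "k \<ge> 0" and C: "C \<ge> 0" and c: "c \<ge> 0"
    and r_large: "k * C * \<beta> powr (m/2) / \<alpha> \<le> r"
    and scale: "2 \<le> k * c * \<alpha> powr (m/2) / \<beta>"
    and g: "g \<le> k * W powr (m/2 - 1) * (C * r - c * r^2)"
  shows "g \<le> - (r powr m)"
proof -
  let ?P = "W powr (m/2 - 1)"
  note P_bounds = powr_ratio_bounds[OF r \<alpha> lower upper m]
  have "0 < \<alpha> * r^2" using \<alpha> r by simp
  then have "0 < \<beta> * r^2" using lower upper by linarith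
  then have \<beta>: "\<beta> > 0" by (rule zero_less_mult_pos2) (use r in simp)
  have "k * ?P * (C * r) \<le> k * (\<beta> powr (m/2) * r powr m / (\<alpha> * r^2)) * (C * r)"
    using P_bounds(2) k C r by (intro mult_right_mono mult_left_mono) auto
  also have "\<dots> = (k * C * \<beta> powr (m/2) / \<alpha>) * (r powr m / r)"
    using r by (simp add: field_simps power2_eq_square)
  also have "\<dots> \<le> r * (r powr m / r)" using r_large r by (intro mult_right_mono) auto
  finally have pos: "k * ?P * (C * r) \<le> r powr m" using r by simp
  have "2 * r powr m \<le> (k * c * \<alpha> powr (m/2) / \<beta>) * r powr m"
    using scale by (intro mult_right_mono) auto
  also have "\<dots> = k * (\<alpha> powr (m/2) * r powr m / (\<beta> * r^2)) * (c * r^2)"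
    using r \<beta> by (simp add: field_simps)
  also have "\<dots> \<le> k * ?P * (c * r^2)"
    using P_bounds(1) k c by (intro mult_right_mono mult_left_mono) auto
  finally have neg: "2 * r powr m \<le> k * ?P * (c * r^2)" .
  have "g \<le> k * ?P * (C * r) - k * ?P * (c * r^2)" using g by (simp add: right_diff_distrib)
  with pos neg show ?thesis by linarith
qed

section \<open>Derivatives of powers of a quadratic form\<close>

lemma qform_has_derivative:
  fixes Q :: "real^'n::finite^'n"
  assumes sym: "transpose Q = Q"
  shows "((\<lambda>x. x \<bullet> (Q *v x)) has_derivative (\<lambda>h. 2 * ((Q *v x) \<bullet> h))) (at x)"
proof -
  have d: "((\<lambda>x. x \<bullet> (Q *v x)) has_derivative (\<lambda>h. x \<bullet> (Q *v h) + h \<bullet> (Q *v x))) (at x)"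
    by (intro has_derivative_inner has_derivative_ident bounded_linear_imp_has_derivative
        matrix_vector_mul_bounded_linear)
  have "x \<bullet> (Q *v h) = (Q *v x) \<bullet> h" for h
  proof -
    have "x \<bullet> (Q *v h) = (x v* Q) \<bullet> h" by (simp add: dot_lmul_matrix)
    also have "x v* Q = Q *v x" using vector_transpose_matrix[of x Q] sym by simp
    finally show ?thesis .
  qed
  then show ?thesis by (intro has_derivative_eq_rhs[OF d]) (auto simp: inner_commute fun_eq_iff)
qed

lemma qform_powr_has_derivative:
  fixes Q :: "real^'n::finite^'n"
  assumes sym: "transpose Q = Q" and pos: "x \<bullet> (Q *v x) > 0"
  shows "((\<lambda>x. (x \<bullet> (Q *v x)) powr (m/2)) has_derivative
           (\<lambda>h. ((m * (x \<bullet> (Q *v x)) powr (m/2 - 1)) *\<^sub>R (Q *v x)) \<bullet> h)) (at x)"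
proof -
  let ?W = "x \<bullet> (Q *v x)"
  have "?W powr (m/2 - 1) = ?W powr (m/2) / ?W" using pos by (simp add: powr_diff)
  then have "?W powr (m/2) * (0 * ln ?W + 2 * ((Q *v x) \<bullet> h) * (m/2) / ?W)
      = ((m * ?W powr (m/2 - 1)) *\<^sub>R (Q *v x)) \<bullet> h" for h
    using pos by (simp add: field_simps)
  then show ?thesis
    by (intro has_derivative_eq_rhs[OF has_derivative_powr[OF qform_has_derivative[OF sym]
          has_derivative_const pos]]) auto
qed

lemma qform_powr_gradient_has_derivative:
  fixes Q :: "real^'n::finite^'n"
  assumes sym: "transpose Q = Q" and pos: "x \<bullet> (Q *v x) > 0"
  shows "((\<lambda>x. (m * (x \<bullet> (Q *v x)) powr (m/2 - 1)) *\<^sub>R (Q *v x)) has_derivative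
           (\<lambda>h. (m * (x \<bullet> (Q *v x)) powr (m/2 - 1)) *\<^sub>R (Q *v h)
               + (m * (x \<bullet> (Q *v x)) powr (m/2 - 1) * (m - 2) * ((Q *v x) \<bullet> h) / (x \<bullet> (Q *v x)))
                 *\<^sub>R (Q *v x))) (at x)"
proof -
  let ?W = "x \<bullet> (Q *v x)"
  have p: "((\<lambda>x. (x \<bullet> (Q *v x)) powr (m/2 - 1)) has_derivative
      (\<lambda>h. ?W powr (m/2 - 1) * (0 * ln ?W + 2 * ((Q *v x) \<bullet> h) * (m/2 - 1) / ?W))) (at x)"
    by (rule has_derivative_powr[OF qform_has_derivative[OF sym] has_derivative_const pos]) simp
  have d: "((\<lambda>x. (m * (x \<bullet> (Q *v x)) powr (m/2 - 1)) *\<^sub>R (Q *v x)) has_derivative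
     (\<lambda>h. (m * ?W powr (m/2 - 1)) *\<^sub>R (Q *v h)
        + (m * (?W powr (m/2 - 1) * (0 * ln ?W + 2 * ((Q *v x) \<bullet> h) * (m/2 - 1) / ?W)))
          *\<^sub>R (Q *v x))) (at x)"
    by (intro has_derivative_scaleR has_derivative_mult_right p bounded_linear_imp_has_derivative
        matrix_vector_mul_bounded_linear)
  have "m * (?W powr (m/2 - 1) * (0 * ln ?W + 2 * c * (m/2 - 1) / ?W))
      = m * ?W powr (m/2 - 1) * (m - 2) * c / ?W" for c
    by (simp add: algebra_simps)
  then show ?thesis by (simp only: has_derivative_eq_rhs[OF d])
qed

lemma pos_def_matD:
  assumes "pos_def_mat Q"
  shows "transpose Q = Q" and "x \<noteq> 0 \<Longrightarrow> x \<bullet> (Q *v x) > 0"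
  using assms unfolding pos_def_mat_def by auto

definition C2_qform_powr :: "real \<Rightarrow> real^'n::finite^'n \<Rightarrow> (real^'n \<Rightarrow> real)
    \<Rightarrow> (real^'n \<Rightarrow> real^'n) \<Rightarrow> (real^'n \<Rightarrow> real^'n^'n) \<Rightarrow> bool" where
  "C2_qform_powr m Q V DV H \<longleftrightarrow> C2_with V DV H
     \<and> (\<forall>x. norm x \<ge> 1 \<longrightarrow> V x = (x \<bullet> (Q *v x)) powr (m / 2))"

context
  fixes m :: real and Q :: "real^'n::finite^'n" and V DV H
  assumes Q: "pos_def_mat Q" and V: "C2_qform_powr m Q V DV H"
begin

lemma C2_qform_powr_gradient:
  assumes x: "norm x > 1"
  shows "DV x = (m * (x \<bullet> (Q *v x)) powr (m/2 - 1)) *\<^sub>R (Q *v x)"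
proof -
  let ?S = "- cball (0::real^'n) 1"
  have xS: "x \<in> ?S" using x by simp
  have pos: "x \<bullet> (Q *v x) > 0" by (rule pos_def_matD(2)[OF Q]) (use x in auto)
  have "(V has_derivative (\<lambda>h. DV x \<bullet> h)) (at x)"
    using V unfolding C2_qform_powr_def C2_with_def by blast
  then have "((\<lambda>x. (x \<bullet> (Q *v x)) powr (m / 2)) has_derivative (\<lambda>h. DV x \<bullet> h)) (at x)"
  proof (rule has_derivative_transform_within_open[OF _ _ xS])
    show "V y = (y \<bullet> (Q *v y)) powr (m / 2)" if "y \<in> ?S" for y
      using V that unfolding C2_qform_powr_def by simp
  qed auto
  from has_derivative_unique[OF this qform_powr_has_derivative[OF pos_def_matD(1)[OF Q] pos]]
  have "\<forall>z. DV x \<bullet> z = ((m * (x \<bullet> (Q *v x)) powr (m/2 - 1)) *\<^sub>R (Q *v x)) \<bullet> z"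
    by metis
  then show ?thesis using vector_eq_rdot by blast
qed

lemma C2_qform_powr_hessian_diag:
  assumes x: "norm x > 1"
  shows "H x $ i $ i = m * (x \<bullet> (Q *v x)) powr (m/2 - 1)
           * (Q $ i $ i + (m - 2) * ((Q *v x) $ i)^2 / (x \<bullet> (Q *v x)))"
proof -
  let ?S = "- cball (0::real^'n) 1"
  let ?W = "x \<bullet> (Q *v x)"
  have xS: "x \<in> ?S" using x by simp
  have pos: "?W > 0" by (rule pos_def_matD(2)[OF Q]) (use x in auto)
  have "(DV has_derivative (\<lambda>h. H x *v h)) (at x)"
    using V unfolding C2_qform_powr_def C2_with_def by blast
  then have "((\<lambda>x. (m * (x \<bullet> (Q *v x)) powr (m/2 - 1)) *\<^sub>R (Q *v x))
      has_derivative (\<lambda>h. H x *v h)) (at x)"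
  proof (rule has_derivative_transform_within_open[OF _ _ xS])
    show "DV y = (m * (y \<bullet> (Q *v y)) powr (m/2 - 1)) *\<^sub>R (Q *v y)" if "y \<in> ?S" for y
      using that by (intro C2_qform_powr_gradient) simp
  qed auto
  from has_derivative_unique[OF this qform_powr_gradient_has_derivative[OF pos_def_matD(1)[OF Q] pos]]
  have "(H x *v axis i 1) $ i = ((m * ?W powr (m/2 - 1)) *\<^sub>R (Q *v axis i 1)
      + (m * ?W powr (m/2 - 1) * (m - 2) * ((Q *v x) \<bullet> axis i 1) / ?W) *\<^sub>R (Q *v x)) $ i"
    by (simp add: fun_eq_iff)
  then have "H x $ i $ i = m * ?W powr (m/2 - 1) * Q $ i $ i
      + m * ?W powr (m/2 - 1) * (m - 2) * (Q *v x) $ i / ?W * (Q *v x) $ i"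
    by (simp add: matrix_vector_mult_basis column_def inner_axis)
  then show ?thesis using pos by (simp add: power2_eq_square field_simps)
qed

end

lemma UU_components:
  assumes "u \<in> UU"
  shows "0 \<le> fst u $ i" "fst u $ i \<le> 1" "0 \<le> snd u $ j" "snd u $ j \<le> 1"
    and "esum (fst u) = 1" "esum (snd u) = 1"
proof -
  have "\<forall>i. fst u $ i \<ge> 0" "\<forall>j. snd u $ j \<ge> 0" "esum (fst u) = 1" "esum (snd u) = 1"
    using assms unfolding UU_def by auto
  moreover have "v $ k \<le> esum v" if "\<forall>k. v $ k \<ge> 0" for v :: "real^'n::finite" and k
    unfolding esum_def using that by (intro member_le_sum) auto
  ultimately show "0 \<le> fst u $ i" "fst u $ i \<le> 1" "0 \<le> snd u $ j" "snd u $ j \<le> 1"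
    and "esum (fst u) = 1" "esum (snd u) = 1" by metis+
qed

lemma sum_abs_le_card_norm:
  fixes x :: "real^'n::finite"
  shows "(\<Sum>i\<in>A. \<bar>x$i\<bar>) \<le> real CARD('n) * norm x"
proof -
  have "(\<Sum>i\<in>A. \<bar>x$i\<bar>) \<le> (\<Sum>i\<in>UNIV. \<bar>x$i\<bar>)" by (intro sum_mono2) auto
  also have "\<dots> \<le> (\<Sum>i\<in>(UNIV::'n set). norm x)" by (intro sum_mono component_le_norm_cart)
  finally show ?thesis by simp
qed

lemma abs_esum_le_card_norm:
  fixes x :: "real^'n::finite"
  shows "\<bar>esum x\<bar> \<le> real CARD('n) * norm x"
  unfolding esum_def using sum_abs[of "\<lambda>i. x$i" UNIV] sum_abs_le_card_norm[of x UNIV] by linarith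

context star_network
begin

lemma norm_le_esum_leaves:
  fixes x :: "real^'i"
  shows "norm x \<le> \<bar>esum x\<bar> + 2 * (\<Sum>k\<in>leaves. \<bar>x$k\<bar>)"
proof -
  have "norm x \<le> (\<Sum>i\<in>UNIV. \<bar>x$i\<bar>)" by (rule norm_le_l1_cart)
  also have "\<dots> = \<bar>x$i0\<bar> + (\<Sum>k\<in>leaves. \<bar>x$k\<bar>)" by (simp add: sum.remove)
  also have "\<bar>x$i0\<bar> \<le> \<bar>esum x\<bar> + (\<Sum>k\<in>leaves. \<bar>x$k\<bar>)"
    using esum_hub_split[of x] sum_abs[of "\<lambda>k. x$k" leaves] by linarith
  finally show ?thesis by simp
qed

lemma norm_sq_le_esum_leaves:
  fixes x :: "real^'i"
  shows "(norm x)^2 \<le> 8 * ((esum x)^2 + (\<Sum>k\<in>leaves. \<bar>x$k\<bar>)^2)"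
proof -
  define s where "s = esum x"
  define a where "a = (\<Sum>k\<in>leaves. \<bar>x$k\<bar>)"
  have "a \<ge> 0" unfolding a_def by (auto intro: sum_nonneg)
  then have "(norm x)^2 \<le> (\<bar>s\<bar> + 2*a)^2"
    using norm_le_esum_leaves[of x] unfolding s_def a_def by (intro power_mono) auto
  also have "\<dots> \<le> 8 * (s^2 + a^2)"
  proof -
    have "2 * (a * \<bar>s\<bar>) \<le> a^2 + s^2"
      using zero_le_power2[of "\<bar>s\<bar> - a"] by (simp add: power2_eq_square algebra_simps)
    moreover have "(\<bar>s\<bar> + 2*a)^2 = s^2 + 4 * (a * \<bar>s\<bar>) + 4 * a^2"
      by (simp add: power2_eq_square algebra_simps)
    moreover have "8 * (s^2 + a^2) = 8 * s^2 + 8 * a^2" by simp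
    ultimately show ?thesis using zero_le_power2[of s] zero_le_power2[of a] by linarith
  qed
  finally show ?thesis unfolding s_def a_def .
qed

lemma leaves_l1_sq_le:
  fixes x :: "real^'i"
  shows "(\<Sum>k\<in>leaves. \<bar>x$k\<bar>)^2 \<le> real CARD('i) * (\<Sum>k\<in>leaves. (x$k)^2)"
proof -
  have "(\<Sum>k\<in>leaves. \<bar>x$k\<bar>)^2 \<le> (\<Sum>k\<in>leaves. \<bar>x$k\<bar>^2) * card leaves"
    by (rule sum_squared_le_sum_of_squares)
  also have "\<dots> \<le> (\<Sum>k\<in>leaves. (x$k)^2) * CARD('i)"
  proof -
    have "card leaves \<le> CARD('i)" by (rule card_mono) auto
    then show ?thesis unfolding power2_abs by (intro mult_left_mono) (auto intro: sum_nonneg)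
  qed
  finally show ?thesis by (simp add: mult.commute)
qed

lemma leaves_sq_le_norm_sq:
  fixes x :: "real^'i"
  shows "(\<Sum>k\<in>leaves. (x$k)^2) \<le> (norm x)^2"
proof -
  have "(\<Sum>k\<in>leaves. (x$k)^2) \<le> (\<Sum>k\<in>UNIV. (x$k)^2)" by (intro sum_mono2) auto
  also have "\<dots> = (norm x)^2"
    unfolding power2_norm_eq_inner inner_vec_def by (simp add: power2_eq_square)
  finally show ?thesis .
qed

end

section \<open>The Lyapunov function for star networks\<close>

locale star_drift = star_network E i0 for E :: "'i::finite \<Rightarrow> 'j::finite \<Rightarrow> bool" and i0 +
  fixes \<mu> :: "'i \<Rightarrow> 'j \<Rightarrow> real" and \<gamma> ell :: "'i \<Rightarrow> real"
  assumes mu_pos: "\<forall>i j. E i j \<longrightarrow> \<mu> i j > 0" and gamma_nonneg: "\<forall>i. \<gamma> i \<ge> 0"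
begin

abbreviation b where "b \<equiv> drift E \<mu> \<gamma> ell"

definition rate_gap :: "'i \<Rightarrow> real" where "rate_gap k = \<mu> i0 (pool k) - \<mu> k (pool k)"

text \<open>kappa0 absorbs, by AM-GM, the cross term between e.x and the non-hub coordinates;
  K is chosen with K mu' = kappa0 |I| so that the decay of the non-hub coordinates dominates;
  eta bounds a positive e.x by their l1-mass inside the cone e.x <= delta |x|.\<close>

definition "\<mu>m = Min (range (\<mu> i0))"
definition "\<mu>' = Min (insert 1 ((\<lambda>k. \<mu> k (pool k)) ` leaves))"
definition "Dm = (\<Sum>k\<in>leaves. \<bar>rate_gap k\<bar>)"
definition "Mg = (\<Sum>k\<in>leaves. \<bar>\<mu> k (pool k) - \<gamma> k\<bar>)"
definition "Lm = (\<Sum>k\<in>leaves. \<bar>ell k\<bar>)"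
definition "L1 = \<bar>\<Sum>i\<in>UNIV. ell i\<bar>"
definition "\<kappa>0 = Dm^2 / (2*\<mu>m) + 2 + \<mu>'"
definition "K = \<kappa>0 * real CARD('i) / \<mu>'"
definition "\<eta> = 1 / (1 + 2*Dm + K*Mg)"
definition "\<delta> = \<eta> / 4"
definition "cc = min (\<mu>m/2) (1/2)"

lemma mum_pos: "\<mu>m > 0"
proof -
  have "\<mu>m \<in> range (\<mu> i0)" unfolding \<mu>m_def by (rule Min_in) auto
  then show ?thesis using mu_pos hub_adj by auto
qed

lemma mum_le: "\<mu>m \<le> \<mu> i0 j" unfolding \<mu>m_def by (rule Min_le) auto

lemma mu'_pos: "\<mu>' > 0"
proof -
  have "\<mu>' \<in> insert 1 ((\<lambda>k. \<mu> k (pool k)) ` leaves)" unfolding \<mu>'_def by (rule Min_in) auto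
  moreover have "\<mu> k (pool k) > 0" if "k \<in> leaves" for k
    using mu_pos adj_iff_pool[of k "pool k"] that by auto
  ultimately show ?thesis by fastforce
qed

lemma mu'_le: "k \<in> leaves \<Longrightarrow> \<mu>' \<le> \<mu> k (pool k)" unfolding \<mu>'_def by (rule Min_le) auto

lemma coeff_sums_nonneg: "Dm \<ge> 0" "Mg \<ge> 0" "Lm \<ge> 0" "L1 \<ge> 0"
  unfolding Dm_def Mg_def Lm_def L1_def by (auto intro: sum_nonneg)

lemma kappa0_ge: "\<kappa>0 \<ge> Dm^2 / (2*\<mu>m) + 2" unfolding \<kappa>0_def using mu'_pos by simp

lemma kappa0_nonneg: "\<kappa>0 \<ge> 0"
proof -
  have "Dm^2 / (2*\<mu>m) \<ge> 0" using mum_pos by simp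
  with kappa0_ge show ?thesis by linarith
qed

lemma K_ge_card: "K \<ge> real CARD('i)"
proof -
  have "\<kappa>0 / \<mu>' \<ge> 1" using mu'_pos mum_pos unfolding \<kappa>0_def by simp
  then show ?thesis
    unfolding K_def using mult_left_mono[of 1 "\<kappa>0 / \<mu>'" "real CARD('i)"] by (simp add: mult.commute)
qed

lemma card_ge_1: "real CARD('i) \<ge> 1" by (simp add: Suc_leI)

lemma K_ge_1: "K \<ge> 1" using K_ge_card card_ge_1 by linarith

lemma eta_bounds: "0 < \<eta>" "\<eta> \<le> 1" "\<eta> * (2*Dm + K*Mg) \<le> 1"
proof -
  have "2*Dm + K*Mg \<ge> 0" using coeff_sums_nonneg K_ge_1 by simp
  then show "0 < \<eta>" "\<eta> \<le> 1" "\<eta> * (2*Dm + K*Mg) \<le> 1"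
    unfolding \<eta>_def by (auto simp: field_simps)
qed

lemma delta_pos: "\<delta> > 0" unfolding \<delta>_def using eta_bounds by simp

definition lyap_vec :: "real^'i \<Rightarrow> real^'i" where
  "lyap_vec x = (\<chi> i. esum x + (if i = i0 then 0 else K * x$i))"

lemma drift_inner_lyap_vec:
  fixes x :: "real^'i"
  assumes u: "u \<in> UU"
  defines "s \<equiv> esum x" and "uc \<equiv> fst u" and "us \<equiv> snd u"
  shows "b x u \<bullet> lyap_vec x =
    s * (max (-s) 0 * (\<Sum>j\<in>UNIV. \<mu> i0 j * us$j) + (\<Sum>k\<in>leaves. rate_gap k * x$k)
       - max s 0 * (\<Sum>k\<in>leaves. rate_gap k * uc$k) - max s 0 * (\<Sum>i\<in>UNIV. \<gamma> i * uc$i)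
       + (\<Sum>i\<in>UNIV. ell i))
    + K * (- (\<Sum>k\<in>leaves. \<mu> k (pool k) * (x$k)^2)
       + max s 0 * (\<Sum>k\<in>leaves. ((\<mu> k (pool k) - \<gamma> k) * uc$k) * x$k)
       + (\<Sum>k\<in>leaves. ell k * x$k))"
proof -
  let ?sp = "max s 0" and ?sn = "max (-s) 0"
  have leaf: "b x u $ k = - \<mu> k (pool k) * (x$k - ?sp * uc$k) - \<gamma> k * ?sp * uc$k + ell k"
    if "k \<in> leaves" for k
    using drift_leaf[OF u] that unfolding s_def uc_def by simp
  have hub: "b x u $ i0 = ?sn * (\<Sum>j\<in>UNIV. \<mu> i0 j * us$j)
      + (\<Sum>k\<in>leaves. \<mu> i0 (pool k) * (x$k - ?sp * uc$k)) - \<gamma> i0 * ?sp * uc$i0 + ell i0"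
    using drift_hub[OF u] unfolding s_def uc_def us_def by simp
  have "b x u \<bullet> lyap_vec x = b x u $ i0 * s + (\<Sum>k\<in>leaves. b x u $ k * (s + K * x$k))"
    unfolding inner_vec_def lyap_vec_def s_def
    by (subst sum.remove[of UNIV i0]) (auto intro!: sum.cong)
  also have "\<dots> = s * (b x u $ i0 + (\<Sum>k\<in>leaves. b x u $ k)) + K * (\<Sum>k\<in>leaves. b x u $ k * x$k)"
    by (simp add: algebra_simps sum.distrib sum_distrib_left sum_distrib_right)
  also have "(\<Sum>k\<in>leaves. b x u $ k) + (\<Sum>k\<in>leaves. \<mu> i0 (pool k) * (x$k - ?sp * uc$k))
      = (\<Sum>k\<in>leaves. rate_gap k * x$k - ?sp * (rate_gap k * uc$k) - ?sp * (\<gamma> k * uc$k) + ell k)"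
    unfolding sum.distrib[symmetric] by (intro sum.cong) (auto simp: leaf rate_gap_def algebra_simps)
  then have "b x u $ i0 + (\<Sum>k\<in>leaves. b x u $ k) = ?sn * (\<Sum>j\<in>UNIV. \<mu> i0 j * us$j)
       + (\<Sum>k\<in>leaves. rate_gap k * x$k) - ?sp * (\<Sum>k\<in>leaves. rate_gap k * uc$k)
       - ?sp * (\<Sum>i\<in>UNIV. \<gamma> i * uc$i) + (\<Sum>i\<in>UNIV. ell i)"
    unfolding hub
    by (simp add: sum.remove[of UNIV i0] sum.distrib sum_subtractf sum_distrib_left algebra_simps)
  also have "(\<Sum>k\<in>leaves. b x u $ k * x$k) = - (\<Sum>k\<in>leaves. \<mu> k (pool k) * (x$k)^2)
       + ?sp * (\<Sum>k\<in>leaves. ((\<mu> k (pool k) - \<gamma> k) * uc$k) * x$k) + (\<Sum>k\<in>leaves. ell k * x$k)"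
  proof -
    have "(\<Sum>k\<in>leaves. b x u $ k * x$k) = (\<Sum>k\<in>leaves. - (\<mu> k (pool k) * (x$k)^2)
        + ?sp * (((\<mu> k (pool k) - \<gamma> k) * uc$k) * x$k) + ell k * x$k)"
      by (intro sum.cong) (auto simp: leaf algebra_simps power2_eq_square)
    then show ?thesis by (simp add: sum.distrib sum_negf sum_distrib_left sum_subtractf)
  qed
  finally show ?thesis by simp
qed

lemma esum_le_leaves_in_cone:
  fixes x :: "real^'i"
  assumes cone: "\<not> esum x > \<delta> * norm x" and pos: "esum x > 0"
  shows "esum x \<le> \<eta> * (\<Sum>k\<in>leaves. \<bar>x$k\<bar>)"
proof -
  define s where "s = esum x"
  define a where "a = (\<Sum>k\<in>leaves. \<bar>x$k\<bar>)"
  have a: "a \<ge> 0" unfolding a_def by (auto intro: sum_nonneg)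
  have "s \<le> \<delta> * norm x" using cone unfolding s_def by simp
  also have "\<dots> \<le> \<delta> * (s + 2*a)"
    using norm_le_esum_leaves[of x] pos delta_pos unfolding s_def a_def by (intro mult_left_mono) auto
  finally have "s \<le> \<delta> * s + 2 * \<delta> * a" by (simp add: algebra_simps)
  moreover have "\<delta> * s \<le> (1/4) * s"
    using eta_bounds pos unfolding \<delta>_def s_def by (intro mult_right_mono) auto
  ultimately have "s \<le> (8/3) * \<delta> * a" by linarith
  also have "\<dots> \<le> \<eta> * a" unfolding \<delta>_def using a eta_bounds by (simp add: mult_right_mono)
  finally show ?thesis unfolding s_def a_def .
qed

lemma hub_service_ge:
  assumes "u \<in> UU"
  shows "\<mu>m \<le> (\<Sum>j\<in>UNIV. \<mu> i0 j * snd u $ j)"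
proof -
  note uu = UU_components[OF assms]
  have "\<mu>m = (\<Sum>j\<in>UNIV. \<mu>m * snd u $ j)"
    using uu unfolding esum_def by (simp add: sum_distrib_left[symmetric])
  also have "\<dots> \<le> (\<Sum>j\<in>UNIV. \<mu> i0 j * snd u $ j)"
    using uu mum_le by (intro sum_mono mult_right_mono) auto
  finally show ?thesis .
qed

lemma leaf_decay_ge:
  fixes x :: "real^'i"
  shows "\<kappa>0 * (\<Sum>k\<in>leaves. \<bar>x$k\<bar>)^2 \<le> K * (\<Sum>k\<in>leaves. \<mu> k (pool k) * (x$k)^2)"
proof -
  have "\<kappa>0 * (\<Sum>k\<in>leaves. \<bar>x$k\<bar>)^2 \<le> \<kappa>0 * (real CARD('i) * (\<Sum>k\<in>leaves. (x$k)^2))"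
    using leaves_l1_sq_le kappa0_nonneg by (intro mult_left_mono) auto
  also have "\<dots> = K * (\<mu>' * (\<Sum>k\<in>leaves. (x$k)^2))" unfolding K_def using mu'_pos by simp
  also have "\<dots> \<le> K * (\<Sum>k\<in>leaves. \<mu> k (pool k) * (x$k)^2)"
    unfolding sum_distrib_left using mu'_le K_ge_1
    by (intro mult_left_mono sum_mono mult_right_mono) auto
  finally show ?thesis .
qed

lemma drift_inner_lyap_vec_le:
  fixes x :: "real^'i"
  assumes u: "u \<in> UU" and cone: "\<not> esum x > \<delta> * norm x"
  defines "a \<equiv> \<Sum>k\<in>leaves. \<bar>x$k\<bar>"
  shows "b x u \<bullet> lyap_vec x \<le> - cc * ((esum x)^2 + a^2) + (L1 + K * Lm) * (\<bar>esum x\<bar> + a)"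
proof -
  define uc where "uc = fst u"
  define us where "us = snd u"
  note uu = UU_components[OF u, folded uc_def us_def]
  have a: "a \<ge> 0" unfolding a_def by (auto intro: sum_nonneg)
  note A = hub_service_ge[OF u, folded us_def]
  have T1: "\<bar>\<Sum>k\<in>leaves. rate_gap k * x$k\<bar> \<le> Dm * a"
    unfolding Dm_def a_def by (rule abs_sum_mult_le_sum_abs) simp
  have T2: "\<bar>\<Sum>k\<in>leaves. rate_gap k * uc$k\<bar> \<le> Dm"
    using abs_sum_mult_le[of leaves "\<lambda>k. uc$k" 1 rate_gap] uu unfolding Dm_def by simp
  have G: "(\<Sum>i\<in>UNIV. \<gamma> i * uc$i) \<ge> 0" using gamma_nonneg uu by (intro sum_nonneg) auto
  note R3 = leaf_decay_ge[of x, folded a_def]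
  have R4: "\<bar>\<Sum>k\<in>leaves. ((\<mu> k (pool k) - \<gamma> k) * uc$k) * x$k\<bar> \<le> Mg * a"
  proof -
    have "\<bar>\<Sum>k\<in>leaves. ((\<mu> k (pool k) - \<gamma> k) * uc$k) * x$k\<bar>
        \<le> (\<Sum>k\<in>leaves. \<bar>(\<mu> k (pool k) - \<gamma> k) * uc$k\<bar>) * a"
      unfolding a_def by (rule abs_sum_mult_le_sum_abs) simp
    also have "\<dots> \<le> Mg * a" unfolding Mg_def
      using uu by (intro mult_right_mono a sum_mono) (auto simp: abs_mult mult_left_le)
    finally show ?thesis .
  qed
  have R5: "\<bar>\<Sum>k\<in>leaves. ell k * x$k\<bar> \<le> Lm * a"
    unfolding Lm_def a_def by (rule abs_sum_mult_le_sum_abs) simp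
  have "esum x > 0 \<longrightarrow> esum x \<le> \<eta> * a"
    using esum_le_leaves_in_cone[OF cone] unfolding a_def by blast
  from drift_scalar_ineq[OF a mum_pos A T1 T2 G _ order.trans[OF zero_le_one K_ge_1] R3 kappa0_ge R4 R5
      eta_bounds(2,3) this coeff_sums_nonneg(1-3), of "\<Sum>i\<in>UNIV. ell i" L1]
  show ?thesis unfolding drift_inner_lyap_vec[OF u] uc_def us_def cc_def L1_def by simp
qed

definition lyap_mat :: "real \<Rightarrow> real^'i^'i" where
  "lyap_mat t = (\<chi> i k. t * (1 + (if i = k \<and> i \<noteq> i0 then K else 0)))"

lemma lyap_mat_mult: "lyap_mat t *v x = t *\<^sub>R lyap_vec x"
proof -
  have "(lyap_mat t *v x) $ i = t * (esum x + (if i = i0 then 0 else K * x$i))" for i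
  proof -
    have "(lyap_mat t *v x) $ i = (\<Sum>k\<in>UNIV. t * x$k + (if k = i \<and> i \<noteq> i0 then t * K * x$k else 0))"
      unfolding lyap_mat_def matrix_vector_mult_def by (auto intro!: sum.cong simp: algebra_simps)
    also have "\<dots> = t * esum x + (if i = i0 then 0 else t * K * x$i)"
      unfolding esum_def by (simp add: sum.distrib sum_distrib_left)
    finally show ?thesis by (simp add: algebra_simps)
  qed
  then show ?thesis unfolding lyap_vec_def by (simp add: vec_eq_iff)
qed

lemma lyap_mat_symmetric: "transpose (lyap_mat t) = lyap_mat t"
  unfolding lyap_mat_def transpose_def by (auto simp: vec_eq_iff)

lemma lyap_mat_diag: "lyap_mat t $ i $ i = t * (1 + (if i \<noteq> i0 then K else 0))"
  unfolding lyap_mat_def by simp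

lemma inner_lyap_vec: "x \<bullet> lyap_vec x = (esum x)^2 + K * (\<Sum>k\<in>leaves. (x$k)^2)"
proof -
  have "x \<bullet> lyap_vec x = (\<Sum>i\<in>UNIV. x$i * esum x + (if i = i0 then 0 else K * (x$i)^2))"
    unfolding inner_vec_def lyap_vec_def by (auto intro!: sum.cong simp: algebra_simps power2_eq_square)
  also have "\<dots> = esum x * esum x + K * (\<Sum>k\<in>leaves. (x$k)^2)"
  proof -
    have "(\<Sum>i\<in>UNIV. (if i = i0 then 0 else K * (x$i)^2)) = (\<Sum>k\<in>leaves. K * (x$k)^2)"
      by (subst sum.remove[of UNIV i0]) (auto intro!: sum.cong)
    moreover have "(\<Sum>i\<in>UNIV. x$i * esum x) = esum x * esum x"
      by (simp add: sum_distrib_right[symmetric] esum_def[symmetric])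
    ultimately show ?thesis by (simp add: sum.distrib sum_distrib_left)
  qed
  finally show ?thesis by (simp add: power2_eq_square)
qed

lemma norm_sq_le_inner_lyap_vec:
  fixes x :: "real^'i"
  shows "(norm x)^2 \<le> 8 * (x \<bullet> lyap_vec x)"
proof -
  have "(\<Sum>k\<in>leaves. \<bar>x$k\<bar>)^2 \<le> real CARD('i) * (\<Sum>k\<in>leaves. (x$k)^2)" by (rule leaves_l1_sq_le)
  also have "\<dots> \<le> K * (\<Sum>k\<in>leaves. (x$k)^2)" using K_ge_card by (intro mult_right_mono) (auto intro: sum_nonneg)
  finally have "8 * ((esum x)^2 + (\<Sum>k\<in>leaves. \<bar>x$k\<bar>)^2) \<le> 8 * ((esum x)^2 + K * (\<Sum>k\<in>leaves. (x$k)^2))" by simp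
  then show ?thesis using norm_sq_le_esum_leaves[of x] unfolding inner_lyap_vec by linarith
qed

lemma inner_lyap_vec_le:
  fixes x :: "real^'i"
  shows "x \<bullet> lyap_vec x \<le> (real CARD('i)^2 + K) * (norm x)^2"
proof -
  have "(esum x)^2 \<le> (real CARD('i) * norm x)^2"
  proof -
    have "\<bar>esum x\<bar> \<le> real CARD('i) * norm x" by (rule abs_esum_le_card_norm)
    then have "\<bar>esum x\<bar>^2 \<le> (real CARD('i) * norm x)^2" by (intro power_mono) auto
    then show ?thesis by simp
  qed
  moreover have "K * (\<Sum>k\<in>leaves. (x$k)^2) \<le> K * (norm x)^2" using K_ge_1 leaves_sq_le_norm_sq[of x] by (intro mult_left_mono) auto
  ultimately show ?thesis unfolding inner_lyap_vec by (simp add: power_mult_distrib algebra_simps)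
qed

lemma lyap_vec_component_sq_le:
  fixes x :: "real^'i"
  shows "((lyap_vec x) $ i)^2 \<le> 2*K * (x \<bullet> lyap_vec x)"
proof -
  define s where "s = esum x"
  define r2 where "r2 = (\<Sum>k\<in>leaves. (x$k)^2)"
  have r20: "r2 \<ge> 0" unfolding r2_def by (auto intro: sum_nonneg)
  have xi: "i \<noteq> i0 \<Longrightarrow> (x$i)^2 \<le> r2" unfolding r2_def by (intro member_le_sum) auto
  have "((lyap_vec x) $ i)^2 \<le> 2 * s^2 + 2 * K^2 * r2"
  proof (cases "i = i0")
    case True then show ?thesis unfolding lyap_vec_def s_def using r20 K_ge_1 by simp
  next
    case False
    have "(s + K * x$i)^2 \<le> 2 * s^2 + 2 * (K * x$i)^2"
    proof -
      have "0 \<le> (s - K * x$i)^2" by simp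
      then show ?thesis by (simp add: power2_eq_square algebra_simps)
    qed
    also have "(K * x$i)^2 \<le> K^2 * r2" using xi[OF False] by (simp add: power_mult_distrib mult_left_mono)
    finally show ?thesis using False unfolding lyap_vec_def s_def by simp
  qed
  also have "\<dots> \<le> 2*K * (s^2 + K * r2)"
  proof -
    have "s^2 \<le> K * s^2" using K_ge_1 by (simp add: mult_le_cancel_right1)
    then show ?thesis by (simp add: algebra_simps power2_eq_square)
  qed
  finally show ?thesis unfolding inner_lyap_vec s_def r2_def .
qed

lemma lyap_mat_pos_def: assumes "t > 0" shows "pos_def_mat (lyap_mat t)"
  unfolding pos_def_mat_def
proof (intro conjI allI impI)
  show "transpose (lyap_mat t) = lyap_mat t" by (rule lyap_mat_symmetric)
  fix x :: "real^'i" assume "x \<noteq> 0"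
  then have "(norm x)^2 > 0" by simp
  then have "x \<bullet> lyap_vec x > 0" using norm_sq_le_inner_lyap_vec[of x] by linarith
  then show "x \<bullet> (lyap_mat t *v x) > 0" using assms by (simp add: lyap_mat_mult)
qed

definition "Bc = (1 + real CARD('i)) * ((\<Sum>j\<in>UNIV. \<bar>\<mu> i0 j\<bar>) + (\<Sum>k\<in>leaves. \<bar>\<mu> i0 (pool k)\<bar>)
    + (\<Sum>k\<in>leaves. \<bar>\<mu> k (pool k)\<bar>) + (\<Sum>i\<in>UNIV. \<bar>\<gamma> i\<bar>) + (\<Sum>i\<in>UNIV. \<bar>ell i\<bar>))"

lemma Bc_nonneg: "Bc \<ge> 0"
  unfolding Bc_def by (intro mult_nonneg_nonneg add_nonneg_nonneg sum_nonneg) auto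

lemma drift_linear_growth:
  fixes x :: "real^'i"
  assumes u: "u \<in> UU"
  shows "\<bar>b x u $ i\<bar> \<le> Bc * (1 + norm x)"
proof -
  define Z where "Z = (1 + real CARD('i)) * (1 + norm x)"
  define s where "s = esum x"
  note uu = UU_components[OF u]
  have Z: "norm x \<le> Z" "real CARD('i) * norm x \<le> Z" "1 \<le> Z"
    unfolding Z_def using card_ge_1 by (auto simp: algebra_simps)
  have s: "\<bar>s\<bar> \<le> real CARD('i) * norm x" unfolding s_def by (rule abs_esum_le_card_norm)
  have sn: "max (-s) 0 \<le> Z" using s Z by linarith
  have sp_uc: "0 \<le> max s 0 * fst u $ k" "max s 0 * fst u $ k \<le> real CARD('i) * norm x" for k
    using mult_left_mono[OF uu(2), of "max s 0" k] uu(1) s by auto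
  have x_sp: "\<bar>x$k - max s 0 * fst u $ k\<bar> \<le> Z" for k
    using component_le_norm_cart[of x k] sp_uc[of k] unfolding Z_def by (auto simp: algebra_simps)
  have gam: "\<bar>\<gamma> k * max s 0 * fst u $ k\<bar> \<le> (\<Sum>i\<in>UNIV. \<bar>\<gamma> i\<bar>) * Z" for k
    unfolding abs_mult mult.assoc using sp_uc[of k] Z
    by (intro mult_mono member_le_sum) (auto intro: sum_nonneg)
  have ell: "\<bar>ell k\<bar> \<le> (\<Sum>i\<in>UNIV. \<bar>ell i\<bar>) * Z" for k
    using mult_left_mono[OF Z(3), of "\<Sum>i\<in>UNIV. \<bar>ell i\<bar>"] member_le_sum[of k UNIV "\<lambda>i. \<bar>ell i\<bar>"]
    by (auto intro: sum_nonneg)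
  have "\<bar>b x u $ i\<bar> \<le> ((\<Sum>j\<in>UNIV. \<bar>\<mu> i0 j\<bar>) + (\<Sum>k\<in>leaves. \<bar>\<mu> i0 (pool k)\<bar>)
      + (\<Sum>k\<in>leaves. \<bar>\<mu> k (pool k)\<bar>) + (\<Sum>i\<in>UNIV. \<bar>\<gamma> i\<bar>) + (\<Sum>i\<in>UNIV. \<bar>ell i\<bar>)) * Z"
  proof (cases "i = i0")
    case True
    have "\<bar>max (-s) 0 * (\<Sum>j\<in>UNIV. \<mu> i0 j * snd u $ j)\<bar> \<le> Z * ((\<Sum>j\<in>UNIV. \<bar>\<mu> i0 j\<bar>) * 1)"
      unfolding abs_mult using sn uu(3,4) Z
      by (intro mult_mono abs_sum_mult_le) (auto intro: sum_nonneg)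
    moreover have "\<bar>\<Sum>k\<in>leaves. \<mu> i0 (pool k) * (x$k - max s 0 * fst u $ k)\<bar>
        \<le> (\<Sum>k\<in>leaves. \<bar>\<mu> i0 (pool k)\<bar>) * Z"
      using x_sp by (rule abs_sum_mult_le)
    moreover have "0 \<le> (\<Sum>k\<in>leaves. \<bar>\<mu> k (pool k)\<bar>) * Z" using Z by (auto intro: sum_nonneg)
    ultimately show ?thesis using True drift_hub[OF u, where \<mu>=\<mu> and \<gamma>=\<gamma> and ell=ell and x=x] gam[of i0] ell[of i0]
      unfolding s_def by (simp add: algebra_simps abs_le_iff)
  next
    case False
    have "\<bar>\<mu> i (pool i) * (x$i - max s 0 * fst u $ i)\<bar> \<le> (\<Sum>k\<in>leaves. \<bar>\<mu> k (pool k)\<bar>) * Z"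
      unfolding abs_mult using x_sp[of i] False Z
      by (intro mult_mono member_le_sum[of i leaves "\<lambda>k. \<bar>\<mu> k (pool k)\<bar>"]) auto
    moreover have "0 \<le> (\<Sum>j\<in>UNIV. \<bar>\<mu> i0 j\<bar>) * Z" "0 \<le> (\<Sum>k\<in>leaves. \<bar>\<mu> i0 (pool k)\<bar>) * Z"
      using Z by (auto intro: sum_nonneg)
    ultimately show ?thesis using False drift_leaf[OF u False, where \<mu>=\<mu> and \<gamma>=\<gamma> and ell=ell and x=x] gam[of i] ell[of i]
      unfolding s_def by (simp add: algebra_simps abs_le_iff)
  qed
  then show ?thesis unfolding Bc_def Z_def by (simp add: ac_simps)
qed

text \<open>C4 m bounds the diagonal of the Hessian of V relative to m t (x'Qx)^(m/2-1),
  C3 collects the terms of L^u V of order |x|, and the scale tt m of Q makes the drift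
  contribution, of size m t c2 |x|^2 (x'Qx)^(m/2-1), exceed 2|x|^m.\<close>

definition "C4 m = 1 + K + 2 * K * \<bar>m - 2\<bar>"
definition "CL = L1 + K * Lm"
definition "C3 lam m = (\<Sum>i\<in>UNIV. lam i) * C4 m + 2 * real CARD('i) * CL"
definition "c2 = cc / 8"
definition "\<Lambda> = real CARD('i)^2 + K"
definition "tt m = 8 * max 1 ((2 * \<Lambda> / (m * c2))^2)"

lemma c2_pos: "c2 > 0" unfolding c2_def cc_def using mum_pos by simp

lemma Lambda_pos: "\<Lambda> > 0" unfolding \<Lambda>_def using K_ge_1 zero_le_power2[of "real CARD('i)"] by linarith

lemma tt_pos: "tt m > 0" unfolding tt_def by simp

lemma tt_large:
  assumes m: "m \<ge> 1"
  shows "2 \<le> (m * c2 / \<Lambda>) * (tt m / 8) powr (m/2)"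
proof -
  define z where "z = 2 * \<Lambda> / (m * c2)"
  have z: "z > 0" unfolding z_def using m c2_pos Lambda_pos by simp
  have t8: "tt m / 8 = max 1 (z^2)" unfolding tt_def z_def by simp
  have "z \<le> sqrt (max 1 (z^2))" using z by (metis max.cobounded2 real_sqrt_abs real_sqrt_le_mono abs_of_pos)
  also have "\<dots> = (tt m / 8) powr (1/2)" unfolding t8 by (simp add: powr_half_sqrt)
  also have "\<dots> \<le> (tt m / 8) powr (m/2)" unfolding t8 using m by (intro powr_mono) auto
  finally have "(m * c2 / \<Lambda>) * z \<le> (m * c2 / \<Lambda>) * (tt m / 8) powr (m/2)"
    using m c2_pos Lambda_pos by (intro mult_left_mono) auto
  moreover have "(m * c2 / \<Lambda>) * z = 2" unfolding z_def using m c2_pos Lambda_pos by simp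
  ultimately show ?thesis by simp
qed

lemma inner_lyap_mat: "x \<bullet> (lyap_mat t *v x) = t * (x \<bullet> lyap_vec x)"
  by (simp add: lyap_mat_mult)

lemma lyap_mat_bounds:
  fixes x :: "real^'i"
  assumes t: "t > 0"
  shows "t / 8 * (norm x)^2 \<le> x \<bullet> (lyap_mat t *v x)"
    and "x \<bullet> (lyap_mat t *v x) \<le> t * \<Lambda> * (norm x)^2"
  using mult_left_mono[OF norm_sq_le_inner_lyap_vec[of x], of t]
    mult_left_mono[OF inner_lyap_vec_le[of x], of t] t
  unfolding inner_lyap_mat \<Lambda>_def by (auto simp: field_simps)

lemma drift_inner_lyap_vec_le_norm:
  fixes x :: "real^'i"
  assumes u: "u \<in> UU" and cone: "\<not> esum x > \<delta> * norm x"
  shows "b x u \<bullet> lyap_vec x \<le> - c2 * (norm x)^2 + 2 * real CARD('i) * CL * norm x"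
proof -
  define s where "s = esum x"
  define a where "a = (\<Sum>k\<in>leaves. \<bar>x$k\<bar>)"
  have "c2 * (norm x)^2 \<le> c2 * (8 * (s^2 + a^2))"
    using norm_sq_le_esum_leaves[of x] c2_pos unfolding s_def a_def by (intro mult_left_mono) auto
  then have "- cc * (s^2 + a^2) \<le> - c2 * (norm x)^2" unfolding c2_def by (simp add: algebra_simps)
  moreover have "\<bar>s\<bar> + a \<le> 2 * real CARD('i) * norm x"
    using abs_esum_le_card_norm[of x] sum_abs_le_card_norm[of x leaves] unfolding s_def a_def by simp
  then have "CL * (\<bar>s\<bar> + a) \<le> CL * (2 * real CARD('i) * norm x)"
    using coeff_sums_nonneg K_ge_1 unfolding CL_def by (intro mult_left_mono) auto
  moreover have "CL * (2 * real CARD('i) * norm x) = 2 * real CARD('i) * CL * norm x" by simp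
  ultimately show ?thesis
    using drift_inner_lyap_vec_le[OF u cone] unfolding s_def a_def CL_def by linarith
qed

context
  fixes m t :: real and V DV H
  assumes m: "m \<ge> 1" and t: "t > 0" and V: "C2_qform_powr m (lyap_mat t) V DV H"
begin

lemma hessian_diag_le:
  fixes x :: "real^'i"
  assumes x: "norm x > 1"
  shows "H x $ i $ i \<le> m * (x \<bullet> (lyap_mat t *v x)) powr (m/2 - 1) * (t * C4 m)"
proof -
  let ?W = "x \<bullet> (lyap_mat t *v x)" and ?q = "(lyap_mat t *v x) $ i"
  have "0 < t / 8 * (norm x)^2" using t x by (intro mult_pos_pos) auto
  then have W: "?W > 0" using lyap_mat_bounds(1)[OF t, of x] by linarith
  have "?q^2 = t^2 * ((lyap_vec x) $ i)^2" unfolding lyap_mat_mult by (simp add: power_mult_distrib)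
  also have "\<dots> \<le> t^2 * (2 * K * (x \<bullet> lyap_vec x))"
    using lyap_vec_component_sq_le[of x i] by (intro mult_left_mono) auto
  also have "\<dots> = (t * (2 * K)) * ?W" unfolding inner_lyap_mat by (simp add: power2_eq_square)
  finally have "?q^2 / ?W \<le> t * (2 * K)" using W by (simp add: divide_le_eq)
  then have "(m - 2) * (?q^2 / ?W) \<le> \<bar>m - 2\<bar> * (t * (2 * K))"
    using W by (intro order.trans[OF mult_right_mono mult_left_mono]) auto
  moreover have "lyap_mat t $ i $ i \<le> t * (1 + K)"
    unfolding lyap_mat_diag using t K_ge_1 by auto
  ultimately have "lyap_mat t $ i $ i + (m - 2) * ?q^2 / ?W \<le> t * C4 m"
    unfolding C4_def by (simp add: algebra_simps)
  then show ?thesis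
    unfolding C2_qform_powr_hessian_diag[OF lyap_mat_pos_def[OF t] V x] using m
    by (intro mult_left_mono) auto
qed

lemma ctrl_gen_le:
  fixes x :: "real^'i"
  assumes lam: "\<forall>i. lam i > 0" and x: "norm x > 1" and u: "u \<in> UU"
    and cone: "\<not> esum x > \<delta> * norm x"
  shows "ctrl_gen lam b DV H x u \<le> m * (x \<bullet> (lyap_mat t *v x)) powr (m/2 - 1) * t
           * (C4 m * (\<Sum>i\<in>UNIV. lam i) + 2 * real CARD('i) * CL * norm x - c2 * (norm x)^2)"
proof -
  define P where "P = m * (x \<bullet> (lyap_mat t *v x)) powr (m/2 - 1)"
  have P: "P * t \<ge> 0" unfolding P_def using m t by simp
  have "(\<Sum>i\<in>UNIV. lam i * H x $ i $ i) \<le> (\<Sum>i\<in>UNIV. lam i * (P * (t * C4 m)))"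
    using lam hessian_diag_le[OF x] unfolding P_def by (intro sum_mono mult_left_mono) (auto simp: less_imp_le)
  also have "\<dots> = P * t * (C4 m * (\<Sum>i\<in>UNIV. lam i))"
    by (simp add: sum_distrib_left sum_distrib_right ac_simps)
  finally have hess: "(\<Sum>i\<in>UNIV. lam i * H x $ i $ i) \<le> P * t * (C4 m * (\<Sum>i\<in>UNIV. lam i))" .
  have "b x u \<bullet> DV x = P * t * (b x u \<bullet> lyap_vec x)"
    unfolding C2_qform_powr_gradient[OF lyap_mat_pos_def[OF t] V x] lyap_mat_mult P_def by simp
  also have "\<dots> \<le> P * t * (- c2 * (norm x)^2 + 2 * real CARD('i) * CL * norm x)"
    using drift_inner_lyap_vec_le_norm[OF u cone] P by (rule mult_left_mono)
  finally show ?thesis using hess unfolding ctrl_gen_def P_def[symmetric] by (simp add: algebra_simps)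
qed

lemma ctrl_gen_le_neg_powr:
  fixes x :: "real^'i"
  assumes lam: "\<forall>i. lam i > 0" and u: "u \<in> UU" and cone: "\<not> esum x > \<delta> * norm x"
    and scale: "2 \<le> (m * c2 / \<Lambda>) * (t / 8) powr (m/2)"
    and x: "norm x \<ge> max 2 (8 * m * C3 lam m * (t * \<Lambda>) powr (m/2))"
  shows "ctrl_gen lam b DV H x u \<le> - (norm x powr m)"
proof -
  define r where "r = norm x"
  have r: "r \<ge> 1" "norm x > 1" using x unfolding r_def by auto
  have sum_lam: "(\<Sum>i\<in>UNIV. lam i) \<ge> 0" using lam by (auto intro: sum_nonneg less_imp_le)
  have C4: "C4 m \<ge> 0" unfolding C4_def using K_ge_1 by simp
  have C3: "C3 lam m \<ge> 0"
    unfolding C3_def CL_def using sum_lam C4 coeff_sums_nonneg K_ge_1 by simp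
  have "C4 m * (\<Sum>i\<in>UNIV. lam i) \<le> C4 m * (\<Sum>i\<in>UNIV. lam i) * r"
    using mult_left_mono[OF r(1), of "C4 m * (\<Sum>i\<in>UNIV. lam i)"] C4 sum_lam by simp
  then have "C4 m * (\<Sum>i\<in>UNIV. lam i) + 2 * real CARD('i) * CL * r - c2 * r^2 \<le> C3 lam m * r - c2 * r^2"
    unfolding C3_def by (simp add: algebra_simps)
  then have "m * (x \<bullet> (lyap_mat t *v x)) powr (m/2 - 1) * t
      * (C4 m * (\<Sum>i\<in>UNIV. lam i) + 2 * real CARD('i) * CL * r - c2 * r^2)
      \<le> m * (x \<bullet> (lyap_mat t *v x)) powr (m/2 - 1) * t * (C3 lam m * r - c2 * r^2)"
    using m t by (intro mult_left_mono) auto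
  then have g: "ctrl_gen lam b DV H x u
      \<le> m * t * (x \<bullet> (lyap_mat t *v x)) powr (m/2 - 1) * (C3 lam m * r - c2 * r^2)"
    using ctrl_gen_le[OF lam r(2) u cone] unfolding r_def by (simp add: ac_simps)
  show ?thesis unfolding r_def[symmetric]
  proof (rule powr_drift_dominates[OF _ _ _ _ _ _ C3 less_imp_le[OF c2_pos] _ _ g])
    show "t / 8 * r^2 \<le> x \<bullet> (lyap_mat t *v x)" "x \<bullet> (lyap_mat t *v x) \<le> t * \<Lambda> * r^2"
      unfolding r_def using lyap_mat_bounds[OF t] by auto
    show "m * t * C3 lam m * (t * \<Lambda>) powr (m/2) / (t / 8) \<le> r"
      using x t unfolding r_def by simp
    show "2 \<le> m * t * c2 * (t / 8) powr (m/2) / (t * \<Lambda>)"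
      using scale t by (simp add: field_simps)
  qed (use r m t in auto)
qed

end

lemma ctrl_gen_bounded_on_ball:
  assumes lam: "\<forall>i. lam i > 0" and C2: "C2_with V DV H"
  obtains M where "\<And>x u. u \<in> UU \<Longrightarrow> norm x \<le> R \<Longrightarrow> ctrl_gen lam b DV H x u \<le> M"
proof -
  have "continuous_on (cball 0 R) H" using C2 unfolding C2_with_def by (auto intro: continuous_on_subset)
  then obtain B1 where B1: "\<And>x. x \<in> cball 0 R \<Longrightarrow> norm (H x) \<le> B1"
    using continuous_on_compact_bound[OF compact_cball] by blast
  have "continuous_on (cball 0 R) DV"
    using C2 has_derivative_continuous unfolding C2_with_def
    by (blast intro: continuous_at_imp_continuous_on)
  then obtain B2 where B2: "\<And>x. x \<in> cball 0 R \<Longrightarrow> norm (DV x) \<le> B2"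
    using continuous_on_compact_bound[OF compact_cball] by blast
  show thesis
  proof (rule that)
    fix x :: "real^'i" and u :: "(real^'i) \<times> (real^'j)"
    assume u: "u \<in> UU" and "norm x \<le> R"
    then have x: "x \<in> cball 0 R" by simp
    have "lam i * H x $ i $ i \<le> lam i * B1" for i
    proof -
      have "H x $ i $ i \<le> norm (H x $ i)" using component_le_norm_cart[of "H x $ i" i] by simp
      also have "\<dots> \<le> norm (H x)" by (rule Finite_Cartesian_Product.norm_nth_le)
      also have "\<dots> \<le> B1" using B1[OF x] .
      finally show ?thesis using lam by (intro mult_left_mono) (auto simp: less_imp_le)
    qed
    then have hess: "(\<Sum>i\<in>UNIV. lam i * H x $ i $ i) \<le> (\<Sum>i\<in>UNIV. lam i * B1)" by (rule sum_mono)
    have R: "0 \<le> 1 + R" using x by (simp add: order_trans[OF norm_ge_zero])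
    have "b x u $ i * DV x $ i \<le> Bc * (1 + R) * B2" for i
    proof -
      have "b x u $ i * DV x $ i \<le> \<bar>b x u $ i\<bar> * \<bar>DV x $ i\<bar>" by (simp only: abs_mult[symmetric] abs_ge_self)
      also have "\<dots> \<le> Bc * (1 + R) * B2"
      proof (rule mult_mono)
        have "\<bar>b x u $ i\<bar> \<le> Bc * (1 + norm x)" by (rule drift_linear_growth[OF u])
        also have "\<dots> \<le> Bc * (1 + R)" using x Bc_nonneg by (intro mult_left_mono) auto
        finally show "\<bar>b x u $ i\<bar> \<le> Bc * (1 + R)" .
        show "\<bar>DV x $ i\<bar> \<le> B2" using component_le_norm_cart[of "DV x" i] B2[OF x] by linarith
        show "0 \<le> Bc * (1 + R)" using Bc_nonneg R by simp
      qed simp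
      finally show ?thesis .
    qed
    then have "b x u \<bullet> DV x \<le> (\<Sum>i\<in>(UNIV::'i set). Bc * (1 + R) * B2)"
      unfolding inner_vec_def inner_real_def by (intro sum_mono)
    with hess show "ctrl_gen lam b DV H x u
        \<le> (\<Sum>i\<in>UNIV. lam i * B1) + (\<Sum>i\<in>(UNIV::'i set). Bc * (1 + R) * B2)"
      unfolding ctrl_gen_def by linarith
  qed
qed

lemma lyapunov_inequality:
  assumes lam: "\<forall>i. lam i > 0" and m: "m \<ge> 1" and V: "C2_qform_powr m (lyap_mat (tt m)) V DV H"
  shows "\<exists>\<kappa> > 0. \<forall>x. \<forall>u\<in>UU. \<not> esum x > \<delta> * norm x \<longrightarrow>
           ctrl_gen lam b DV H x u \<le> \<kappa> - norm x powr m"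
proof -
  define R where "R = max 2 (8 * m * C3 lam m * (tt m * \<Lambda>) powr (m/2))"
  obtain M where M: "\<And>x u. u \<in> UU \<Longrightarrow> norm x \<le> R \<Longrightarrow> ctrl_gen lam b DV H x u \<le> M"
    using ctrl_gen_bounded_on_ball[OF lam] V unfolding C2_qform_powr_def by blast
  have "ctrl_gen lam b DV H x u \<le> max 1 (M + R powr m) - norm x powr m"
    if u: "u \<in> UU" and cone: "\<not> esum x > \<delta> * norm x" for x u
  proof (cases "norm x \<ge> R")
    case True
    then show ?thesis
      using ctrl_gen_le_neg_powr[OF m tt_pos V lam u cone tt_large[OF m]] unfolding R_def by simp
  next
    case False
    then have "norm x powr m \<le> R powr m" using m by (intro powr_mono2) auto
    moreover have "ctrl_gen lam b DV H x u \<le> M" using M[OF u] False by simp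
    moreover have "M + R powr m \<le> max 1 (M + R powr m)" by simp
    ultimately show ?thesis by linarith
  qed
  then show ?thesis by (intro exI[of _ "max 1 (M + R powr m)"]) auto
qed

end

theorem corollary4p2:
  fixes E :: "'i::finite \<Rightarrow> 'j::finite \<Rightarrow> bool"
    and lam \<gamma> ell :: "'i \<Rightarrow> real"
    and \<mu> :: "'i \<Rightarrow> 'j \<Rightarrow> real"
    and m :: real
  assumes tree: "bip_tree E"
    and lam: "\<forall>i. lam i > 0"
    and gam: "\<forall>i. \<gamma> i \<ge> 0"
    and mu_pos: "\<forall>i j. E i j \<longrightarrow> \<mu> i j > 0"
    and mu_zero: "\<forall>i j. \<not> E i j \<longrightarrow> \<mu> i j = 0"
    and one_branch: "card {i. card {j. E i j} > 1} \<le> 1"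
    and m: "m \<ge> 1"
  shows "\<exists>\<delta> > 0. \<exists>Q :: real^'i^'i. pos_def_mat Q \<and>
           (\<forall>V DV H. C2_with V DV H
              \<and> (\<forall>x. norm x \<ge> 1 \<longrightarrow> V x = (x \<bullet> (Q *v x)) powr (m / 2))
              \<longrightarrow> (\<exists>\<kappa> > 0. \<forall>x. \<forall>u\<in>UU.
                     \<not> (esum x > \<delta> * norm x) \<longrightarrow>
                     ctrl_gen lam (drift E \<mu> \<gamma> ell) DV H x u \<le> \<kappa> - norm x powr m))"
proof -
  obtain i0 where "\<forall>j. E i0 j" and "\<forall>i. i \<noteq> i0 \<longrightarrow> card {j. E i j} = 1"
    using bip_tree_star[OF tree one_branch] .
  then interpret star_drift E i0 \<mu> \<gamma> ell
    using mu_pos gam by unfold_locales auto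
  show ?thesis
    using delta_pos lyap_mat_pos_def[OF tt_pos] lyapunov_inequality[OF lam m]
    unfolding C2_qform_powr_def by blast
qed

end
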